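(* Let $F$ be an algebraically closed field with $\operatorname{char}F>3$, $R=F[[x,y]]$, and let $f=(f_1,f_2)\in R^2$ be a unimodal isolated complete intersection singularity with $\operatorname{ord}(f_1)=3$ and $\operatorname{ord}(f_2)\ge 3$. Then the $3$-jet $j_3(f)$ is contact equivalent (under the $3$-jet contact group acting on $R^2/\mathfrak m^4R^2$) to one of $(x^3,0)$, $(x^3,x^2y)$, $(x^3,xy^2)$, $(x^3,y^3+x^2y)$, $(x^3,y^3)$, $(x^2y,0)$, $(x^2y,xy^2)$, $(x^2y,x^3+xy^2)$, $(x^3+x^2y,\,y^3+\lambda x^2y)$ with $\lambda\neq 0$, $(x^2y,x^3+y^3)$, $(x^3+xy^2,0)$.
   Context: $\mathfrak m=\langle x,y\rangle$. $f=(f_1,f_2)\in R^2$ with $f_i\in\mathfrak m$ is an ICIS if $f_1,f_2$ is a regular sequence and $\mathfrak m^k\subset\langle f_1,f_2\rangle+I_2(J(f))$ for some $k$. $j_3(f)$ is the image of $f$ in $J_3=R^2/\mathfrak m^4R^2$; the contact jet group $\mathcal K_3=\{(j_3(U),j_3(\phi))\}$ ($U\in GL(2,R)$, $\phi\in\operatorname{Aut}(R)$) acts by $j_3(f)\mapsto j_3(U\cdot\phi(f))$. Unimodal means $\mathcal K$-modality $1$, the $\mathcal K$-modality being the modality (Arnold, Greuel–Nguyen) of a sufficiently high jet under the contact jet group action. *)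

theory Defs
  imports "HOL-Computational_Algebra.Computational_Algebra"
begin

section \<open>The ring R = F[[x,y]], realised as F[[x]][[y]]\<close>

type_synonym 'a ps2 = "'a fps fps"

definition px :: "'a::comm_ring_1 ps2" where "px = fps_const fps_X"
definition py :: "'a::comm_ring_1 ps2" where "py = fps_X"

definition coeff2 :: "'a::comm_ring_1 ps2 \<Rightarrow> nat \<Rightarrow> nat \<Rightarrow> 'a" where
  "coeff2 f i j = (f $ j) $ i"

definition mono2 :: "nat \<Rightarrow> nat \<Rightarrow> 'a::comm_ring_1 ps2" where
  "mono2 i j = px ^ i * py ^ j"

definition ord2 :: "'a::comm_ring_1 ps2 \<Rightarrow> nat" where
  "ord2 f = (LEAST n. \<exists>i j. i + j = n \<and> coeff2 f i j \<noteq> 0)"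

definition in_max :: "'a::comm_ring_1 ps2 \<Rightarrow> bool" where
  "in_max f \<longleftrightarrow> coeff2 f 0 0 = 0"

definition dx2 :: "'a::comm_ring_1 ps2 \<Rightarrow> 'a ps2" where
  "dx2 f = Abs_fps (\<lambda>j. fps_deriv (f $ j))"
definition dy2 :: "'a::comm_ring_1 ps2 \<Rightarrow> 'a ps2" where
  "dy2 f = fps_deriv f"

definition ideal_gen :: "'a::comm_ring_1 ps2 set \<Rightarrow> 'a ps2 set" where
  "ideal_gen S = {g. \<exists>n (c :: nat \<Rightarrow> 'a ps2) s. (\<forall>i<n. s i \<in> S) \<and> g = (\<Sum>i<n. c i * s i)}"

definition max_pow :: "nat \<Rightarrow> 'a::comm_ring_1 ps2 set" where
  "max_pow k = ideal_gen {mono2 i j | i j. i + j = k}"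

definition regular_seq2 :: "'a::comm_ring_1 ps2 \<Rightarrow> 'a ps2 \<Rightarrow> bool" where
  "regular_seq2 f1 f2 \<longleftrightarrow>
     (\<forall>g. g * f1 = 0 \<longrightarrow> g = 0) \<and>
     (\<forall>g. g * f2 \<in> ideal_gen {f1} \<longrightarrow> g \<in> ideal_gen {f1}) \<and>
     1 \<notin> ideal_gen {f1, f2}"

definition jac_det :: "'a::comm_ring_1 ps2 \<Rightarrow> 'a ps2 \<Rightarrow> 'a ps2" where
  "jac_det f1 f2 = dx2 f1 * dy2 f2 - dy2 f1 * dx2 f2"

definition ICIS :: "'a::comm_ring_1 ps2 \<Rightarrow> 'a ps2 \<Rightarrow> bool" where
  "ICIS f1 f2 \<longleftrightarrow> in_max f1 \<and> in_max f2 \<and> regular_seq2 f1 f2 \<and>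
     (\<exists>k. max_pow k \<subseteq> ideal_gen {f1, f2, jac_det f1 f2})"

text \<open>substitution g(phi1, phi2), for phi1, phi2 in m\<close>
definition subst2 :: "'a::comm_ring_1 ps2 \<Rightarrow> 'a ps2 \<Rightarrow> 'a ps2 \<Rightarrow> 'a ps2" where
  "subst2 g p1 p2 = Abs_fps (\<lambda>j. Abs_fps (\<lambda>i.
     \<Sum>(a, b) \<in> {(a, b). a + b \<le> i + j}. coeff2 g a b * coeff2 (p1 ^ a * p2 ^ b) i j))"

text \<open>automorphisms of R: x \<mapsto> phi1, y \<mapsto> phi2 with phi_i in m and invertible linear part\<close>
definition is_aut :: "'a::field ps2 \<times> 'a ps2 \<Rightarrow> bool" where
  "is_aut \<phi> \<longleftrightarrow> in_max (fst \<phi>) \<and> in_max (snd \<phi>) \<and>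
     coeff2 (fst \<phi>) 1 0 * coeff2 (snd \<phi>) 0 1 - coeff2 (fst \<phi>) 0 1 * coeff2 (snd \<phi>) 1 0 \<noteq> 0"

text \<open>GL(2,R): matrices ((u11,u12),(u21,u22)) whose determinant is a unit of R\<close>
definition is_GL2 :: "('a::field ps2 \<times> 'a ps2) \<times> ('a ps2 \<times> 'a ps2) \<Rightarrow> bool" where
  "is_GL2 U \<longleftrightarrow> coeff2 (fst (fst U) * snd (snd U) - snd (fst U) * fst (snd U)) 0 0 \<noteq> 0"

definition contact_act ::
  "('a::field ps2 \<times> 'a ps2) \<times> ('a ps2 \<times> 'a ps2) \<Rightarrow> 'a ps2 \<times> 'a ps2 \<Rightarrow> 'a ps2 \<times> 'a ps2 \<Rightarrow> 'a ps2 \<times> 'a ps2" where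
  "contact_act U \<phi> f =
     (let g1 = subst2 (fst f) (fst \<phi>) (snd \<phi>); g2 = subst2 (snd f) (fst \<phi>) (snd \<phi>)
      in (fst (fst U) * g1 + snd (fst U) * g2, fst (snd U) * g1 + snd (snd U) * g2))"

text \<open>k-jet of a power series / of a pair (canonical truncated representative)\<close>
definition trunc2 :: "nat \<Rightarrow> 'a::comm_ring_1 ps2 \<Rightarrow> 'a ps2" where
  "trunc2 k g = Abs_fps (\<lambda>j. Abs_fps (\<lambda>i. if i + j \<le> k then coeff2 g i j else 0))"

definition jet :: "nat \<Rightarrow> 'a::comm_ring_1 ps2 \<times> 'a ps2 \<Rightarrow> 'a ps2 \<times> 'a ps2" where
  "jet k f = (trunc2 k (fst f), trunc2 k (snd f))"

text \<open>the jet space J_k = R^2 / m^(k+1) R^2, as truncated pairs\<close>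
definition jet_space :: "nat \<Rightarrow> ('a::comm_ring_1 ps2 \<times> 'a ps2) set" where
  "jet_space k = {z. jet k z = z}"

definition K3_equiv :: "'a::field ps2 \<times> 'a ps2 \<Rightarrow> 'a ps2 \<times> 'a ps2 \<Rightarrow> bool" where
  "K3_equiv f g \<longleftrightarrow> (\<exists>U \<phi>. is_GL2 U \<and> is_aut \<phi> \<and> jet 3 (contact_act U \<phi> f) = jet 3 g)"

definition K_orbit :: "nat \<Rightarrow> 'a::field ps2 \<times> 'a ps2 \<Rightarrow> ('a ps2 \<times> 'a ps2) set" where
  "K_orbit k z = {jet k (contact_act U \<phi> z) | U \<phi>. is_GL2 U \<and> is_aut \<phi>}"

inductive_set polyfun :: "('a::comm_ring_1 ps2 \<times> 'a ps2 \<Rightarrow> 'a) set" where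
  pf_const: "(\<lambda>z. c) \<in> polyfun"
| pf_coord1: "(\<lambda>z. coeff2 (fst z) i j) \<in> polyfun"
| pf_coord2: "(\<lambda>z. coeff2 (snd z) i j) \<in> polyfun"
| pf_add: "p \<in> polyfun \<Longrightarrow> q \<in> polyfun \<Longrightarrow> (\<lambda>z. p z + q z) \<in> polyfun"
| pf_mult: "p \<in> polyfun \<Longrightarrow> q \<in> polyfun \<Longrightarrow> (\<lambda>z. p z * q z) \<in> polyfun"

definition zclosed :: "nat \<Rightarrow> ('a::comm_ring_1 ps2 \<times> 'a ps2) set \<Rightarrow> bool" where
  "zclosed k S \<longleftrightarrow> (\<exists>P \<subseteq> polyfun. S = {z \<in> jet_space k. \<forall>p\<in>P. p z = 0})"

definition zopen :: "nat \<Rightarrow> ('a::comm_ring_1 ps2 \<times> 'a ps2) set \<Rightarrow> bool" where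
  "zopen k U \<longleftrightarrow> U \<subseteq> jet_space k \<and> zclosed k (jet_space k - U)"

definition rel_closed :: "nat \<Rightarrow> ('a::comm_ring_1 ps2 \<times> 'a ps2) set \<Rightarrow> ('a ps2 \<times> 'a ps2) set \<Rightarrow> bool" where
  "rel_closed k A C \<longleftrightarrow> (\<exists>S. zclosed k S \<and> C = A \<inter> S)"

definition rel_irred_closed :: "nat \<Rightarrow> ('a::comm_ring_1 ps2 \<times> 'a ps2) set \<Rightarrow> ('a ps2 \<times> 'a ps2) set \<Rightarrow> bool" where
  "rel_irred_closed k A C \<longleftrightarrow> rel_closed k A C \<and> C \<noteq> {} \<and>
     \<not> (\<exists>C1 C2. rel_closed k A C1 \<and> rel_closed k A C2 \<and> C1 \<subset> C \<and> C2 \<subset> C \<and> C = C1 \<union> C2)"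

definition zdim :: "nat \<Rightarrow> ('a::comm_ring_1 ps2 \<times> 'a ps2) set \<Rightarrow> nat" where
  "zdim k A = Sup {n. \<exists>Z :: nat \<Rightarrow> ('a ps2 \<times> 'a ps2) set.
      (\<forall>i\<le>n. rel_irred_closed k A (Z i)) \<and> (\<forall>i<n. Z i \<subset> Z (Suc i))}"

section \<open>Modality (Greuel--Nguyen)\<close>

definition Kmod_open :: "nat \<Rightarrow> ('a::field ps2 \<times> 'a ps2) set \<Rightarrow> int" where
  "Kmod_open k U = Max {int (zdim k {z \<in> U. zdim k (K_orbit k z) = t}) - int t | t.
                         {z \<in> U. zdim k (K_orbit k z) = t} \<noteq> {}}"

definition Kmod_jet :: "nat \<Rightarrow> 'a::field ps2 \<times> 'a ps2 \<Rightarrow> int" where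
  "Kmod_jet k z = (LEAST m. \<exists>U. zopen k U \<and> z \<in> U \<and> Kmod_open k U = m)"

definition K_modality_eq :: "'a::field ps2 \<times> 'a ps2 \<Rightarrow> int \<Rightarrow> bool" where
  "K_modality_eq f m \<longleftrightarrow> (\<exists>k0. \<forall>k\<ge>k0. Kmod_jet k (jet k f) = m)"

definition unimodal :: "'a::field ps2 \<times> 'a ps2 \<Rightarrow> bool" where
  "unimodal f \<longleftrightarrow> K_modality_eq f 1"

end

theory Submission
  imports Defs
begin

text \<open>
  Only the cubic parts of \<open>f1\<close> and \<open>f2\<close> enter the 3-jet, and constant invertible matrices
  together with linear coordinate changes act on them as \<open>GL(2) \<times> GL(2)\<close> acts on pairs of binary
  cubic forms. So it suffices to bring every pair \<open>(g1, g2)\<close> of binary cubics with \<open>g1 \<noteq> 0\<close> to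
  one of the listed forms. If \<open>g2\<close> is a multiple of \<open>g1\<close>, a single cubic is normalised according
  to the multiplicities of its roots. Otherwise the pencil spanned by \<open>g1, g2\<close> contains a member
  with a double root, since the points where this happens are the roots of a binary quartic (the
  Jacobian of the pencil); making that member \<open>x^3\<close> or \<open>x^2 y\<close>, the remaining substitutions
  normalise the second form.
\<close>

section \<open>Binary cubic forms under linear substitutions\<close>

text \<open>\<open>Cubic a b c d\<close> is the form \<open>a x^3 + b x^2 y + c x y^2 + d y^3\<close>.\<close>

datatype 'a cubic_form = Cubic 'a 'a 'a 'a

instantiation cubic_form :: (zero) zero
begin
definition zero_cubic_form [simp]: "0 = Cubic 0 0 0 0"
instance ..
end

fun cubic_lincomb :: "'a::comm_ring_1 \<Rightarrow> 'a cubic_form \<Rightarrow> 'a \<Rightarrow> 'a cubic_form \<Rightarrow> 'a cubic_form" where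
  "cubic_lincomb u (Cubic a b c d) v (Cubic a' b' c' d') =
     Cubic (u*a + v*a') (u*b + v*b') (u*c + v*c') (u*d + v*d')"

text \<open>The substitution \<open>x \<mapsto> p x + q y\<close>, \<open>y \<mapsto> r x + s y\<close>.\<close>

fun cubic_subst :: "'a::comm_ring_1 \<Rightarrow> 'a \<Rightarrow> 'a \<Rightarrow> 'a \<Rightarrow> 'a cubic_form \<Rightarrow> 'a cubic_form" where
  "cubic_subst p q r s (Cubic a b c d) = Cubic
     (a*p^3 + b*p^2*r + c*p*r^2 + d*r^3)
     (a*3*p^2*q + b*(p^2*s + 2*p*q*r) + c*(2*p*r*s + q*r^2) + d*3*r^2*s)
     (a*3*p*q^2 + b*(2*p*q*s + q^2*r) + c*(p*s^2 + 2*q*r*s) + d*3*r*s^2)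
     (a*q^3 + b*q^2*s + c*q*s^2 + d*s^3)"

lemma cubic_subst_lincomb:
  "cubic_subst p q r s (cubic_lincomb u c v c') =
     cubic_lincomb u (cubic_subst p q r s c) v (cubic_subst p q r s c')"
  by (cases c; cases c') (simp add: algebra_simps)

lemma cubic_subst_subst:
  "cubic_subst p' q' r' s' (cubic_subst p q r s c) =
     cubic_subst (p*p' + q*r') (p*q' + q*s') (r*p' + s*r') (r*q' + s*s') c"
  by (cases c) (simp add: algebra_simps power2_eq_square power3_eq_cube)

lemma cubic_subst_id [simp]: "cubic_subst 1 0 0 1 c = c"
  by (cases c) simp

lemma cubic_lincomb_id [simp]:
  "cubic_lincomb 1 c 0 c' = c"
  "cubic_lincomb 0 c 1 c' = c'"
  by (cases c; cases c'; simp)+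

text \<open>This is \<^const>\<open>contact_act\<close> with \<open>U = ((u, v), (w, z))\<close> and \<open>\<phi> = (p x + q y, r x + s y)\<close>,
  restricted to cubic forms.\<close>

definition cubic_pair_act ::
  "'a::comm_ring_1 \<Rightarrow> 'a \<Rightarrow> 'a \<Rightarrow> 'a \<Rightarrow> 'a \<Rightarrow> 'a \<Rightarrow> 'a \<Rightarrow> 'a \<Rightarrow>
     'a cubic_form \<times> 'a cubic_form \<Rightarrow> 'a cubic_form \<times> 'a cubic_form" where
  "cubic_pair_act p q r s u v w z X =
     (let c1 = cubic_subst p q r s (fst X); c2 = cubic_subst p q r s (snd X)
      in (cubic_lincomb u c1 v c2, cubic_lincomb w c1 z c2))"

lemma cubic_pair_act_act:
  "cubic_pair_act p' q' r' s' u' v' w' z' (cubic_pair_act p q r s u v w z X) =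
     cubic_pair_act (p*p' + q*r') (p*q' + q*s') (r*p' + s*r') (r*q' + s*s')
       (u'*u + v'*w) (u'*v + v'*z) (w'*u + z'*w) (w'*v + z'*z) X"
proof -
  obtain c1 c2 where X: "X = (c1, c2)" by (cases X)
  let ?subst = "cubic_subst (p*p' + q*r') (p*q' + q*s') (r*p' + s*r') (r*q' + s*s')"
  show ?thesis
    unfolding X cubic_pair_act_def Let_def
    by (cases "?subst c1"; cases "?subst c2")
      (simp_all add: cubic_subst_lincomb cubic_subst_subst algebra_simps)
qed

definition cubic_pair_equiv :: "'a::field cubic_form \<times> 'a cubic_form \<Rightarrow> 'a cubic_form \<times> 'a cubic_form \<Rightarrow> bool" where
  "cubic_pair_equiv X Y \<longleftrightarrow>
     (\<exists>p q r s u v w z. p*s - q*r \<noteq> 0 \<and> u*z - v*w \<noteq> 0 \<and> Y = cubic_pair_act p q r s u v w z X)"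

lemma cubic_pair_equivI:
  "p*s - q*r \<noteq> 0 \<Longrightarrow> u*z - v*w \<noteq> 0 \<Longrightarrow> cubic_pair_equiv X (cubic_pair_act p q r s u v w z X)"
  unfolding cubic_pair_equiv_def by blast

lemma cubic_pair_equiv_refl: "cubic_pair_equiv X X"
  using cubic_pair_equivI[of 1 1 0 0 1 1 0 0 X] by (simp add: cubic_pair_act_def)

lemma cubic_pair_equiv_trans [trans]:
  assumes "cubic_pair_equiv X Y" and "cubic_pair_equiv Y Z"
  shows "cubic_pair_equiv X Z"
proof -
  obtain p q r s u v w z where
    "p*s - q*r \<noteq> 0" "u*z - v*w \<noteq> 0" and Y: "Y = cubic_pair_act p q r s u v w z X"
    using assms(1) unfolding cubic_pair_equiv_def by blast
  moreover obtain p' q' r' s' u' v' w' z' where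
    "p'*s' - q'*r' \<noteq> 0" "u'*z' - v'*w' \<noteq> 0" and Z: "Z = cubic_pair_act p' q' r' s' u' v' w' z' Y"
    using assms(2) unfolding cubic_pair_equiv_def by blast
  moreover have
    "(p*p' + q*r')*(r*q' + s*s') - (p*q' + q*s')*(r*p' + s*r') = (p*s - q*r)*(p'*s' - q'*r')"
    "(u'*u + v'*w)*(w'*v + z'*z) - (u'*v + v'*z)*(w'*u + z'*w) = (u*z - v*w)*(u'*z' - v'*w')"
    by (simp_all add: algebra_simps)
  ultimately show ?thesis
    unfolding cubic_pair_equiv_def by (metis cubic_pair_act_act mult_eq_0_iff)
qed

lemma cubic_pair_equiv_substI:
  assumes "p*s - q*r \<noteq> 0"
    and "cubic_subst p q r s c1 = g1" and "cubic_subst p q r s c2 = g2"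
  shows "cubic_pair_equiv (c1, c2) (g1, g2)"
  using cubic_pair_equivI[of p s q r 1 1 0 0 "(c1, c2)"] assms by (simp add: cubic_pair_act_def)

lemma cubic_pair_equiv_lincombI:
  assumes "u*z - v*w \<noteq> 0"
    and "cubic_lincomb u c1 v c2 = g1" and "cubic_lincomb w c1 z c2 = g2"
  shows "cubic_pair_equiv (c1, c2) (g1, g2)"
  using cubic_pair_equivI[of 1 1 0 0 u z v w "(c1, c2)"] assms by (simp add: cubic_pair_act_def)

lemma cubic_has_root:
  fixes a :: "'a::alg_closed_field"
  assumes "a \<noteq> 0"
  shows "\<exists>x. a*x^3 + b*x^2 + c*x + d = 0"
proof -
  obtain x where "poly [:d, c, b, a:] x = 0"
    using alg_closed_imp_poly_has_root[of "[:d, c, b, a:]"] assms by auto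
  then show ?thesis
    by (auto simp: algebra_simps power2_eq_square power3_eq_cube)
qed

lemma quartic_has_root:
  fixes a :: "'a::alg_closed_field"
  assumes "a \<noteq> 0"
  shows "\<exists>x. a*x^4 + b*x^3 + c*x^2 + d*x + e = 0"
proof -
  obtain x where "poly [:e, d, c, b, a:] x = 0"
    using alg_closed_imp_poly_has_root[of "[:e, d, c, b, a:]"] assms by auto
  then show ?thesis
    by (auto simp: algebra_simps eval_nat_numeral)
qed

lemma singular_2x2_has_kernel:
  fixes e1 e2 d1 d2 :: "'a::field"
  assumes "e1*d2 - e2*d1 = 0"
  obtains s t where "s \<noteq> 0 \<or> t \<noteq> 0" and "s*e1 + t*e2 = 0" and "s*d1 + t*d2 = 0"
proof -
  consider "e1 \<noteq> 0 \<or> e2 \<noteq> 0" | "e1 = 0" "e2 = 0" "d1 \<noteq> 0 \<or> d2 \<noteq> 0" | "e1 = 0" "e2 = 0" "d1 = 0" "d2 = 0"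
    by blast
  then show ?thesis
  proof cases
    case 1
    then show ?thesis by (intro that[of e2 "-e1"]) (use assms in \<open>auto simp: algebra_simps\<close>)
  next
    case 2
    then show ?thesis by (intro that[of d2 "-d1"]) (auto simp: algebra_simps)
  next
    case 3
    then show ?thesis by (intro that[of 1 0]) auto
  qed
qed

section \<open>Normal forms of pairs of binary cubics\<close>

definition normal_cubic_pair :: "'a::field cubic_form \<times> 'a cubic_form \<Rightarrow> bool" where
  "normal_cubic_pair P \<longleftrightarrow>
     P \<in> {(Cubic 1 0 0 0, 0), (Cubic 1 0 0 0, Cubic 0 1 0 0), (Cubic 1 0 0 0, Cubic 0 0 1 0),
          (Cubic 1 0 0 0, Cubic 0 1 0 1), (Cubic 1 0 0 0, Cubic 0 0 0 1), (Cubic 0 1 0 0, 0),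
          (Cubic 0 1 0 0, Cubic 0 0 1 0), (Cubic 0 1 0 0, Cubic 1 0 1 0),
          (Cubic 0 1 0 0, Cubic 1 0 0 1), (Cubic 1 0 1 0, 0)}
     \<or> (\<exists>l. l \<noteq> 0 \<and> P = (Cubic 1 1 0 0, Cubic 0 l 0 1))"

definition has_normal_form :: "'a::field cubic_form \<times> 'a cubic_form \<Rightarrow> bool" where
  "has_normal_form X \<longleftrightarrow> (\<exists>P. normal_cubic_pair P \<and> cubic_pair_equiv X P)"

lemma has_normal_formI: "cubic_pair_equiv X P \<Longrightarrow> normal_cubic_pair P \<Longrightarrow> has_normal_form X"
  unfolding has_normal_form_def by blast

lemma has_normal_form_if_equiv: "cubic_pair_equiv X Y \<Longrightarrow> has_normal_form Y \<Longrightarrow> has_normal_form X"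
  unfolding has_normal_form_def by (blast intro: cubic_pair_equiv_trans)

context
  assumes two: "(2::'a::alg_closed_field) \<noteq> 0" and three: "(3::'a) \<noteq> 0"
begin

lemma has_normal_form_single_x_divisible:
  fixes a b c :: 'a
  assumes "Cubic a b c 0 \<noteq> 0"
  shows "has_normal_form (Cubic a b c 0, 0)"
proof (cases "c = 0")
  case c0: True
  show ?thesis
  proof (cases "b = 0")
    case True
    with c0 assms have "a \<noteq> 0" by auto
    have "cubic_pair_equiv (Cubic a b c 0, 0) (Cubic 1 0 0 0, 0)"
      by (rule cubic_pair_equiv_lincombI[where u="1/a" and v=0 and w=0 and z=1])
        (use \<open>a \<noteq> 0\<close> True c0 in simp_all)
    then show ?thesis by (rule has_normal_formI) (simp add: normal_cubic_pair_def)
  next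
    case False
    have "cubic_pair_equiv (Cubic a b c 0, 0) (Cubic 0 1 0 0, 0)"
      by (rule cubic_pair_equiv_substI[where p=1 and q=0 and r="-a/b" and s="1/b"])
        (use False c0 in \<open>simp_all add: field_simps\<close>)
    then show ?thesis by (rule has_normal_formI) (simp add: normal_cubic_pair_def)
  qed
next
  case False
  define k where "k = -b/(2*c)"
  define a' where "a' = a + b*k + c*k^2"
  have equiv_a': "cubic_pair_equiv (Cubic a b c 0, 0) (Cubic a' 0 c 0, 0)"
    by (rule cubic_pair_equiv_substI[where p=1 and q=0 and r=k and s=1])
      (use False two in \<open>simp_all add: a'_def k_def field_simps\<close>)
  show ?thesis
  proof (cases "a' = 0")
    case True
    note equiv_a'
    also have "cubic_pair_equiv (Cubic a' 0 c 0, 0) (Cubic 0 c 0 0, 0)"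
      by (rule cubic_pair_equiv_substI[where p=0 and q=1 and r=1 and s=0]) (use True in simp_all)
    also have "cubic_pair_equiv (Cubic 0 c 0 0, 0) (Cubic 0 1 0 0, 0)"
      by (rule cubic_pair_equiv_lincombI[where u="1/c" and v=0 and w=0 and z=1]) (use False in simp_all)
    finally show ?thesis by (rule has_normal_formI) (simp add: normal_cubic_pair_def)
  next
    case a'0: False
    obtain \<sigma> where \<sigma>: "\<sigma>^2 = a'/c" using nth_root_exists[of 2] by auto
    with a'0 False have "\<sigma> \<noteq> 0" by auto
    note equiv_a'
    also have "cubic_pair_equiv (Cubic a' 0 c 0, 0) (Cubic a' 0 a' 0, 0)"
      by (rule cubic_pair_equiv_substI[where p=1 and q=0 and r=0 and s=\<sigma>])
        (use \<open>\<sigma> \<noteq> 0\<close> \<sigma> False in \<open>simp_all add: field_simps\<close>)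
    also have "cubic_pair_equiv (Cubic a' 0 a' 0, 0) (Cubic 1 0 1 0, 0)"
      by (rule cubic_pair_equiv_lincombI[where u="1/a'" and v=0 and w=0 and z=1]) (use a'0 in simp_all)
    finally show ?thesis by (rule has_normal_formI) (simp add: normal_cubic_pair_def)
  qed
qed

text \<open>Moving a root of the form to \<open>[0 : 1]\<close> makes it divisible by \<open>x\<close>.\<close>

lemma has_normal_form_single:
  fixes g :: "'a cubic_form"
  assumes "g \<noteq> 0"
  shows "has_normal_form (g, 0)"
proof -
  obtain a b c d where g: "g = Cubic a b c d" by (cases g)
  show ?thesis
  proof (cases "a = 0")
    case True
    have "cubic_pair_equiv (g, 0) (Cubic d c b 0, 0)"
      unfolding g by (rule cubic_pair_equiv_substI[where p=0 and q=1 and r=1 and s=0]) (use True in simp_all)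
    moreover have "Cubic d c b 0 \<noteq> 0" using assms True g by auto
    ultimately show ?thesis
      by (rule has_normal_form_if_equiv[OF _ has_normal_form_single_x_divisible])
  next
    case False
    obtain r where r: "a*r^3 + b*r^2 + c*r + d = 0" using cubic_has_root[OF False] by blast
    have "cubic_pair_equiv (g, 0) (Cubic a (3*a*r + b) (3*a*r^2 + 2*b*r + c) 0, 0)"
      unfolding g by (rule cubic_pair_equiv_substI[where p=1 and q=r and r=0 and s=1])
        (use r in \<open>simp_all add: algebra_simps\<close>)
    moreover have "Cubic a (3*a*r + b) (3*a*r^2 + 2*b*r + c) 0 \<noteq> 0" using False by auto
    ultimately show ?thesis
      by (rule has_normal_form_if_equiv[OF _ has_normal_form_single_x_divisible])
  qed
qed

lemma has_normal_form_x3_pair_with_y3: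
  fixes b c d :: 'a
  assumes "d \<noteq> 0"
  shows "has_normal_form (Cubic 1 0 0 0, Cubic 0 b c d)"
proof -
  let ?X = "Cubic 1 0 0 (0::'a)"
  define k where "k = -c/(3*d)"
  define a' where "a' = b*k + c*k^2 + d*k^3"
  define b' where "b' = b + 2*c*k + 3*d*k^2"
  have "cubic_pair_equiv (?X, Cubic 0 b c d) (?X, Cubic a' b' 0 d)"
    by (rule cubic_pair_equiv_substI[where p=1 and q=0 and r=k and s=1])
      (use assms three in \<open>simp_all add: a'_def b'_def k_def field_simps\<close>)
  also have "cubic_pair_equiv (?X, Cubic a' b' 0 d) (?X, Cubic 0 b' 0 d)"
    by (rule cubic_pair_equiv_lincombI[where u=1 and v=0 and w="-a'" and z=1]) simp_all
  finally have equiv_b': "cubic_pair_equiv (?X, Cubic 0 b c d) (?X, Cubic 0 b' 0 d)" .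
  show ?thesis
  proof (cases "b' = 0")
    case True
    note equiv_b'
    also have "cubic_pair_equiv (?X, Cubic 0 b' 0 d) (?X, Cubic 0 0 0 1)"
      by (rule cubic_pair_equiv_lincombI[where u=1 and v=0 and w=0 and z="1/d"])
        (use True assms in simp_all)
    finally show ?thesis by (rule has_normal_formI) (simp add: normal_cubic_pair_def)
  next
    case False
    obtain \<sigma> where \<sigma>: "\<sigma>^2 = b'/d" using nth_root_exists[of 2] by auto
    with False assms have "\<sigma> \<noteq> 0" by auto
    have \<sigma>3: "d*\<sigma>^3 = b'*\<sigma>"
      using \<sigma> assms by (simp add: power3_eq_cube power2_eq_square field_simps)
    note equiv_b'
    also have "cubic_pair_equiv (?X, Cubic 0 b' 0 d) (?X, Cubic 0 (b'*\<sigma>) 0 (b'*\<sigma>))"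
      by (rule cubic_pair_equiv_substI[where p=1 and q=0 and r=0 and s=\<sigma>])
        (use \<open>\<sigma> \<noteq> 0\<close> \<sigma>3 in \<open>simp_all add: algebra_simps\<close>)
    also have "cubic_pair_equiv (?X, Cubic 0 (b'*\<sigma>) 0 (b'*\<sigma>)) (?X, Cubic 0 1 0 1)"
      by (rule cubic_pair_equiv_lincombI[where u=1 and v=0 and w=0 and z="1/(b'*\<sigma>)"])
        (use \<open>\<sigma> \<noteq> 0\<close> False in simp_all)
    finally show ?thesis by (rule has_normal_formI) (simp add: normal_cubic_pair_def)
  qed
qed

lemma has_normal_form_x3_pair_without_y3:
  fixes b c :: 'a
  shows "has_normal_form (Cubic 1 0 0 0, Cubic 0 b c 0)"
proof -
  let ?X = "Cubic 1 0 0 (0::'a)"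
  consider "c \<noteq> 0" | "c = 0" "b = 0" | "c = 0" "b \<noteq> 0"
    by blast
  then show ?thesis
  proof cases
    case 1
    define k where "k = -b/(2*c)"
    define a' where "a' = b*k + c*k^2"
    have "cubic_pair_equiv (?X, Cubic 0 b c 0) (?X, Cubic a' 0 c 0)"
      by (rule cubic_pair_equiv_substI[where p=1 and q=0 and r=k and s=1])
        (use 1 two in \<open>simp_all add: a'_def k_def field_simps\<close>)
    also have "cubic_pair_equiv (?X, Cubic a' 0 c 0) (?X, Cubic 0 0 1 0)"
      by (rule cubic_pair_equiv_lincombI[where u=1 and v=0 and w="-a'/c" and z="1/c"])
        (use 1 in simp_all)
    finally show ?thesis by (rule has_normal_formI) (simp add: normal_cubic_pair_def)
  next
    case 2
    then show ?thesis
      by (intro has_normal_formI[OF cubic_pair_equiv_refl]) (simp add: normal_cubic_pair_def)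
  next
    case 3
    then have "cubic_pair_equiv (?X, Cubic 0 b c 0) (?X, Cubic 0 1 0 0)"
      by (intro cubic_pair_equiv_lincombI[where u=1 and v=0 and w=0 and z="1/b"]) simp_all
    then show ?thesis by (rule has_normal_formI) (simp add: normal_cubic_pair_def)
  qed
qed

lemma has_normal_form_x3_pair:
  fixes g :: "'a cubic_form"
  shows "has_normal_form (Cubic 1 0 0 0, g)"
proof -
  obtain a b c d where g: "g = Cubic a b c d" by (cases g)
  then have "cubic_pair_equiv (Cubic 1 0 0 0, g) (Cubic 1 0 0 0, Cubic 0 b c d)"
    by (intro cubic_pair_equiv_lincombI[where u=1 and v=0 and w="-a" and z=1]) simp_all
  moreover have "has_normal_form (Cubic 1 0 0 0, Cubic 0 b c d)"
    using has_normal_form_x3_pair_with_y3 has_normal_form_x3_pair_without_y3 by (cases "d = 0") auto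
  ultimately show ?thesis by (rule has_normal_form_if_equiv)
qed

lemma has_normal_form_x2y_pair_y3_free:
  fixes a b c :: 'a
  shows "has_normal_form (Cubic 0 1 0 0, Cubic a b c 0)"
proof -
  let ?Y = "Cubic 0 1 0 (0::'a)"
  have equiv_no_x2y: "cubic_pair_equiv (?Y, Cubic a b c 0) (?Y, Cubic a 0 c 0)"
    by (rule cubic_pair_equiv_lincombI[where u=1 and v=0 and w="-b" and z=1]) simp_all
  have "has_normal_form (?Y, Cubic a 0 c 0)"
  proof (cases "a = 0"; cases "c = 0")
    assume "a = 0" "c = 0"
    then show ?thesis
      by (intro has_normal_formI[OF cubic_pair_equiv_refl]) (simp add: normal_cubic_pair_def)
  next
    assume "a = 0" "c \<noteq> 0"
    then have "cubic_pair_equiv (?Y, Cubic a 0 c 0) (?Y, Cubic 0 0 1 0)"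
      by (intro cubic_pair_equiv_lincombI[where u=1 and v=0 and w=0 and z="1/c"]) simp_all
    then show ?thesis by (rule has_normal_formI) (simp add: normal_cubic_pair_def)
  next
    assume "a \<noteq> 0" "c = 0"
    then have "cubic_pair_equiv (?Y, Cubic a 0 c 0) (Cubic 1 0 0 0, Cubic 0 1 0 0)"
      by (intro cubic_pair_equiv_lincombI[where u=0 and v="1/a" and w=1 and z=0]) simp_all
    then show ?thesis by (rule has_normal_formI) (simp add: normal_cubic_pair_def)
  next
    assume a0: "a \<noteq> 0" and c0: "c \<noteq> 0"
    obtain \<sigma> where \<sigma>: "\<sigma>^2 = a/c" using nth_root_exists[of 2] by auto
    with a0 c0 have "\<sigma> \<noteq> 0" by auto
    have "c*\<sigma>^2 = a" using \<sigma> c0 by (simp add: field_simps)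
    then have "cubic_pair_equiv (?Y, Cubic a 0 c 0) (Cubic 0 \<sigma> 0 0, Cubic a 0 a 0)"
      by (intro cubic_pair_equiv_substI[where p=1 and q=0 and r=0 and s=\<sigma>])
        (use \<open>\<sigma> \<noteq> 0\<close> in \<open>simp_all add: algebra_simps\<close>)
    also have "cubic_pair_equiv (Cubic 0 \<sigma> 0 0, Cubic a 0 a 0) (?Y, Cubic 1 0 1 0)"
      by (rule cubic_pair_equiv_lincombI[where u="1/\<sigma>" and v=0 and w=0 and z="1/a"])
        (use \<open>\<sigma> \<noteq> 0\<close> a0 in simp_all)
    finally show ?thesis by (rule has_normal_formI) (simp add: normal_cubic_pair_def)
  qed
  with equiv_no_x2y show ?thesis by (rule has_normal_form_if_equiv)
qed

text \<open>Here \<open>\<alpha> = -3/e\<close> is chosen so that \<open>x \<mapsto> \<alpha> x, y \<mapsto> x + y\<close> turns \<open>x^2 y\<close> into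
  \<open>\<alpha>^2 (x^3 + x^2 y)\<close> and kills the \<open>x y^2\<close>-term of the second form.\<close>

lemma has_normal_form_x2y_pair_generic:
  fixes e :: 'a
  assumes "e \<noteq> 0" and "e^3 \<noteq> 27"
  shows "has_normal_form (Cubic 0 1 0 0, Cubic 1 0 e 1)"
proof -
  define l where "l = 27/e^3 - 1"
  define \<alpha> where "\<alpha> = -3/e"
  have "l \<noteq> 0" using assms by (simp add: l_def field_simps)
  have "\<alpha> \<noteq> 0" using assms three by (simp add: \<alpha>_def)
  have e\<alpha>: "e*\<alpha> = -3" "\<alpha>*(e*2) = -6" using assms by (simp_all add: \<alpha>_def field_simps)
  have \<alpha>3: "\<alpha>^3 = -(1 + l)" using assms by (simp add: \<alpha>_def l_def power_divide field_simps)
  have \<alpha>5: "\<alpha>^2 + (\<alpha>^5 + l*\<alpha>^2) = 0"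
  proof -
    have "\<alpha>^5 = \<alpha>^2*\<alpha>^3" by (simp flip: power_add)
    then show ?thesis using \<alpha>3 by (simp add: algebra_simps)
  qed
  have "cubic_pair_equiv (Cubic 0 1 0 0, Cubic 1 0 e 1) (Cubic (\<alpha>^2) (\<alpha>^2) 0 0, Cubic (\<alpha>^3 - 2) (-3) 0 1)"
    by (rule cubic_pair_equiv_substI[where p=\<alpha> and q=0 and r=1 and s=1])
      (use \<open>\<alpha> \<noteq> 0\<close> e\<alpha> in \<open>simp_all add: algebra_simps\<close>)
  also have "cubic_pair_equiv \<dots> (Cubic 1 1 0 0, Cubic 0 l 0 1)"
    by (rule cubic_pair_equiv_lincombI[where u="1/\<alpha>^2" and v=0 and w="(l+3)/\<alpha>^2" and z=1])
      (use \<open>\<alpha> \<noteq> 0\<close> \<alpha>3 \<alpha>5 in \<open>simp_all add: field_simps\<close>)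
  finally show ?thesis
    by (rule has_normal_formI) (use \<open>l \<noteq> 0\<close> in \<open>auto simp: normal_cubic_pair_def\<close>)
qed

text \<open>For \<open>e^3 = 27\<close> the pencil contains the cube \<open>(x + \<mu> y)^3\<close> with \<open>\<mu> = (e/3)^2\<close>.\<close>

lemma has_normal_form_x2y_pair_special:
  fixes e :: 'a
  shows "has_normal_form (Cubic 0 1 0 0, Cubic 1 0 e 1)"
proof -
  consider "e = 0" | "e \<noteq> 0" "e^3 \<noteq> 27" | "e^3 = 27"
    by fastforce
  then show ?thesis
  proof cases
    case 1
    then show ?thesis
      by (intro has_normal_formI[OF cubic_pair_equiv_refl]) (simp add: normal_cubic_pair_def)
  next
    case 2
    then show ?thesis by (rule has_normal_form_x2y_pair_generic)
  next
    case 3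
    define \<mu> where "\<mu> = (e/3)^2"
    have "(27::'a) \<noteq> 0" using power_not_zero[OF three, of 3] by simp
    then have e3: "(e/3)^3 = 1" using 3 by (simp add: power_divide)
    have \<mu>3: "\<mu>^3 = 1"
      using e3 unfolding \<mu>_def by (metis power_mult_distrib power_one power_mult mult.commute)
    have \<mu>2: "3*\<mu>^2 = e"
    proof -
      have "\<mu>^2 = (e/3)^3 * (e/3)" unfolding \<mu>_def power_mult[symmetric] power_Suc2[symmetric] by simp
      then show ?thesis using three e3 by (simp add: mult.commute)
    qed
    have "cubic_pair_equiv (Cubic 0 1 0 0, Cubic 1 0 e 1) (Cubic 1 (3*\<mu>) e 1, Cubic 0 1 0 0)"
      by (rule cubic_pair_equiv_lincombI[where u="3*\<mu>" and v=1 and w=1 and z=0]) simp_all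
    also have "cubic_pair_equiv \<dots> (Cubic 1 0 0 0, Cubic 0 1 (-2*\<mu>) (\<mu>^2))"
      by (rule cubic_pair_equiv_substI[where p=1 and q="-\<mu>" and r=0 and s=1])
        (use \<mu>3 \<mu>2[symmetric] in \<open>simp_all add: algebra_simps power2_eq_square power3_eq_cube\<close>)
    finally show ?thesis
      by (rule has_normal_form_if_equiv[OF _ has_normal_form_x3_pair])
  qed
qed

lemma has_normal_form_x2y_pair:
  fixes g :: "'a cubic_form"
  shows "has_normal_form (Cubic 0 1 0 0, g)"
proof -
  let ?Y = "Cubic 0 1 0 (0::'a)"
  obtain a b c d where g: "g = Cubic a b c d" by (cases g)
  have equiv_no_x2y: "cubic_pair_equiv (?Y, g) (?Y, Cubic a 0 c d)"
    unfolding g by (rule cubic_pair_equiv_lincombI[where u=1 and v=0 and w="-b" and z=1]) simp_all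
  consider "d = 0" | "d \<noteq> 0" "a = 0" "c = 0" | "d \<noteq> 0" "a = 0" "c \<noteq> 0" | "d \<noteq> 0" "a \<noteq> 0"
    by blast
  then have "has_normal_form (?Y, Cubic a 0 c d)"
  proof cases
    case 1
    then show ?thesis using has_normal_form_x2y_pair_y3_free by simp
  next
    case 2
    then have "cubic_pair_equiv (?Y, Cubic a 0 c d) (Cubic 0 0 1 0, Cubic d 0 0 0)"
      by (intro cubic_pair_equiv_substI[where p=0 and q=1 and r=1 and s=0]) simp_all
    also have "cubic_pair_equiv \<dots> (Cubic 1 0 0 0, Cubic 0 0 1 0)"
      by (rule cubic_pair_equiv_lincombI[where u=0 and v="1/d" and w=1 and z=0]) (use 2 in simp_all)
    finally show ?thesis by (rule has_normal_formI) (simp add: normal_cubic_pair_def)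
  next
    case 3
    define k where "k = -d/c"
    have "c*k + d = 0" using 3 by (simp add: k_def)
    then have "cubic_pair_equiv (?Y, Cubic a 0 c d) (Cubic 0 1 (2*k) (k^2), Cubic 0 0 c 0)"
      by (intro cubic_pair_equiv_substI[where p=1 and q=k and r=0 and s=1])
        (use 3 in \<open>simp_all add: algebra_simps\<close>)
    also have "cubic_pair_equiv \<dots> (Cubic (k^2) (2*k) 1 0, Cubic 0 c 0 0)"
      by (rule cubic_pair_equiv_substI[where p=0 and q=1 and r=1 and s=0]) simp_all
    also have "cubic_pair_equiv \<dots> (?Y, Cubic (k^2) 0 1 0)"
      by (rule cubic_pair_equiv_lincombI[where u=0 and v="1/c" and w=1 and z="-2*k/c"]) (use 3 in simp_all)
    finally show ?thesis by (rule has_normal_form_if_equiv[OF _ has_normal_form_x2y_pair_y3_free])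
  next
    case 4
    obtain \<alpha> where "\<alpha>^3 = 1/a" using nth_root_exists[of 3] by auto
    with 4 have "\<alpha> \<noteq> 0" and \<alpha>: "a*\<alpha>^3 = 1" by auto
    obtain \<delta> where "\<delta>^3 = 1/d" using nth_root_exists[of 3] by auto
    with 4 have "\<delta> \<noteq> 0" and \<delta>: "d*\<delta>^3 = 1" by auto
    have "cubic_pair_equiv (?Y, Cubic a 0 c d) (Cubic 0 (\<alpha>^2*\<delta>) 0 0, Cubic 1 0 (c*\<alpha>*\<delta>^2) 1)"
      by (rule cubic_pair_equiv_substI[where p=\<alpha> and q=0 and r=0 and s=\<delta>])
        (use \<open>\<alpha> \<noteq> 0\<close> \<open>\<delta> \<noteq> 0\<close> \<alpha> \<delta> in \<open>simp_all add: algebra_simps\<close>)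
    also have "cubic_pair_equiv \<dots> (?Y, Cubic 1 0 (c*\<alpha>*\<delta>^2) 1)"
      by (rule cubic_pair_equiv_lincombI[where u="1/(\<alpha>^2*\<delta>)" and v=0 and w=0 and z=1])
        (use \<open>\<alpha> \<noteq> 0\<close> \<open>\<delta> \<noteq> 0\<close> in simp_all)
    finally show ?thesis by (rule has_normal_form_if_equiv[OF _ has_normal_form_x2y_pair_special])
  qed
  with equiv_no_x2y show ?thesis by (rule has_normal_form_if_equiv)
qed

lemma has_normal_form_x2_multiple_pair:
  fixes \<alpha> \<beta> :: 'a
  assumes "Cubic \<alpha> \<beta> 0 0 \<noteq> 0"
  shows "has_normal_form (Cubic \<alpha> \<beta> 0 0, g)"
proof (cases "\<beta> = 0")
  case True
  with assms have "cubic_pair_equiv (Cubic \<alpha> \<beta> 0 0, g) (Cubic 1 0 0 0, g)"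
    by (cases g) (intro cubic_pair_equiv_lincombI[where u="1/\<alpha>" and v=0 and w=0 and z=1], simp_all)
  then show ?thesis by (rule has_normal_form_if_equiv[OF _ has_normal_form_x3_pair])
next
  case False
  then have "cubic_pair_equiv (Cubic \<alpha> \<beta> 0 0, g) (Cubic 0 1 0 0, cubic_subst 1 0 (-\<alpha>/\<beta>) (1/\<beta>) g)"
    by (intro cubic_pair_equiv_substI[where p=1 and q=0 and r="-\<alpha>/\<beta>" and s="1/\<beta>"]) simp_all
  then show ?thesis by (rule has_normal_form_if_equiv[OF _ has_normal_form_x2y_pair])
qed

text \<open>The hypothesis says that a nontrivial combination of the two forms is divisible by \<open>x^2\<close>.\<close>

lemma has_normal_form_if_y_coeffs_dependent:
  fixes a1 b1 e1 d1 a2 b2 e2 d2 :: 'a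
  assumes "Cubic a1 b1 e1 d1 \<noteq> 0" and "e1*d2 - e2*d1 = 0"
  shows "has_normal_form (Cubic a1 b1 e1 d1, Cubic a2 b2 e2 d2)"
proof -
  obtain s t where st: "s \<noteq> 0 \<or> t \<noteq> 0" and e: "s*e1 + t*e2 = 0" and d: "s*d1 + t*d2 = 0"
    using singular_2x2_has_kernel[OF assms(2)] .
  show ?thesis
  proof (cases "t = 0")
    case True
    with st e d have "e1 = 0" "d1 = 0" by auto
    with assms(1) show ?thesis by (simp add: has_normal_form_x2_multiple_pair)
  next
    case False
    define m where "m = Cubic (s*a1 + t*a2) (s*b1 + t*b2) 0 0"
    show ?thesis
    proof (cases "m = 0")
      case True
      then have "cubic_pair_equiv (Cubic a1 b1 e1 d1, Cubic a2 b2 e2 d2) (Cubic a1 b1 e1 d1, 0)"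
        by (intro cubic_pair_equiv_lincombI[where u=1 and v=0 and w="s/t" and z=1])
          (use False e d in \<open>simp_all add: m_def field_simps\<close>)
      then show ?thesis by (rule has_normal_form_if_equiv[OF _ has_normal_form_single[OF assms(1)]])
    next
      case m0: False
      have "cubic_pair_equiv (Cubic a1 b1 e1 d1, Cubic a2 b2 e2 d2) (m, Cubic a1 b1 e1 d1)"
        by (rule cubic_pair_equiv_lincombI[where u=s and v=t and w=1 and z=0])
          (use False e d in \<open>simp_all add: m_def\<close>)
      moreover have "has_normal_form (m, Cubic a1 b1 e1 d1)"
        using m0 unfolding m_def by (rule has_normal_form_x2_multiple_pair)
      ultimately show ?thesis by (rule has_normal_form_if_equiv)
    qed
  qed
qed

text \<open>A root \<open>r\<close> of the quartic \<open>W\<close> below is a point \<open>[r : 1]\<close> where some member of the pencil has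
  a double root (\<open>W\<close> is, up to a constant, the Jacobian of \<open>g1, g2\<close> there); the substitution
  \<open>x \<mapsto> x + r y\<close> moves it to \<open>[0 : 1]\<close>.\<close>

lemma has_normal_form_pair:
  fixes g1 g2 :: "'a cubic_form"
  assumes "g1 \<noteq> 0"
  shows "has_normal_form (g1, g2)"
proof -
  obtain a1 b1 e1 d1 where g1: "g1 = Cubic a1 b1 e1 d1" by (cases g1)
  obtain a2 b2 e2 d2 where g2: "g2 = Cubic a2 b2 e2 d2" by (cases g2)
  show ?thesis
  proof (cases "a2*b1 - a1*b2 = 0")
    case True
    have "cubic_pair_equiv (g1, g2) (Cubic d1 e1 b1 a1, Cubic d2 e2 b2 a2)"
      unfolding g1 g2 by (rule cubic_pair_equiv_substI[where p=0 and q=1 and r=1 and s=0]) simp_all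
    moreover have "has_normal_form (Cubic d1 e1 b1 a1, Cubic d2 e2 b2 a2)"
      using assms True unfolding g1
      by (intro has_normal_form_if_y_coeffs_dependent) (auto simp: algebra_simps)
    ultimately show ?thesis by (rule has_normal_form_if_equiv)
  next
    case False
    define W where "W r = (a2*b1 - a1*b2)*r^4 + (2*(a2*e1 - a1*e2))*r^3
      + (b2*e1 - b1*e2 + 3*(a2*d1 - a1*d2))*r^2 + (2*(b2*d1 - b1*d2))*r + (d1*e2 - d2*e1)" for r
    obtain r where "W r = 0"
      using quartic_has_root[OF False] unfolding W_def by blast
    let ?h1 = "Cubic a1 (3*a1*r + b1) (3*a1*r^2 + 2*b1*r + e1) (a1*r^3 + b1*r^2 + e1*r + d1)"
    let ?h2 = "Cubic a2 (3*a2*r + b2) (3*a2*r^2 + 2*b2*r + e2) (a2*r^3 + b2*r^2 + e2*r + d2)"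
    have "cubic_pair_equiv (g1, g2) (?h1, ?h2)"
      unfolding g1 g2 by (rule cubic_pair_equiv_substI[where p=1 and q=r and r=0 and s=1])
        (simp_all add: algebra_simps)
    moreover have "has_normal_form (?h1, ?h2)"
    proof (rule has_normal_form_if_y_coeffs_dependent)
      show "?h1 \<noteq> 0" using assms unfolding g1 by auto
      have "(3*a1*r^2 + 2*b1*r + e1)*(a2*r^3 + b2*r^2 + e2*r + d2)
          - (3*a2*r^2 + 2*b2*r + e2)*(a1*r^3 + b1*r^2 + e1*r + d1) = - W r"
        by (simp add: W_def algebra_simps eval_nat_numeral)
      then show "(3*a1*r^2 + 2*b1*r + e1)*(a2*r^3 + b2*r^2 + e2*r + d2)
          - (3*a2*r^2 + 2*b2*r + e2)*(a1*r^3 + b1*r^2 + e1*r + d1) = 0"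
        using \<open>W r = 0\<close> by simp
    qed
    ultimately show ?thesis by (rule has_normal_form_if_equiv)
  qed
qed

end

section \<open>Cubic parts of power series\<close>

abbreviation const2 :: "'a::comm_ring_1 \<Rightarrow> 'a ps2" where
  "const2 c \<equiv> fps_const (fps_const c)"

lemma ps2_eqI: "(\<And>i j. coeff2 f i j = coeff2 g i j) \<Longrightarrow> f = g"
  by (auto simp: coeff2_def fps_eq_iff)

lemma coeff2_add [simp]: "coeff2 (f + g) i j = coeff2 f i j + coeff2 g i j"
  and coeff2_const2_mult [simp]: "coeff2 (const2 c * f) i j = c * coeff2 f i j"
  and coeff2_const2 [simp]: "coeff2 (const2 c) i j = (if i = 0 \<and> j = 0 then c else 0)"
  and coeff2_1 [simp]: "coeff2 1 i j = (if i = 0 \<and> j = 0 then 1 else 0)"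
  and coeff2_px_mult [simp]: "coeff2 (px * f) i j = (if i = 0 then 0 else coeff2 f (i - 1) j)"
  and coeff2_py_mult [simp]: "coeff2 (py * f) i j = (if j = 0 then 0 else coeff2 f i (j - 1))"
  by (simp_all add: coeff2_def px_def py_def)

lemma coeff2_px_power_mult: "coeff2 (px^k * f) i j = (if i < k then 0 else coeff2 f (i - k) j)"
  by (induction k arbitrary: i) (auto simp: mult.assoc)

lemma coeff2_py_power_mult: "coeff2 (py^k * f) i j = (if j < k then 0 else coeff2 f i (j - k))"
  by (induction k arbitrary: j) (auto simp: mult.assoc)

lemma coeff2_mono2: "coeff2 (mono2 k l) i j = (if i = k \<and> j = l then 1 else 0)"
proof -
  have "coeff2 (mono2 k l) i j = coeff2 (px^k * (py^l * 1)) i j"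
    by (simp add: mono2_def)
  then show ?thesis
    unfolding coeff2_px_power_mult coeff2_py_power_mult by auto
qed

definition linear2 :: "'a::comm_ring_1 \<Rightarrow> 'a \<Rightarrow> 'a ps2" where
  "linear2 p q = const2 p * px + const2 q * py"

lemma coeff2_linear2_mult [simp]:
  "coeff2 (linear2 p q * f) i j =
     p * (if i = 0 then 0 else coeff2 f (i - 1) j) + q * (if j = 0 then 0 else coeff2 f i (j - 1))"
  by (simp add: linear2_def distrib_right mult.assoc)

lemma coeff2_linear2 [simp]:
  "coeff2 (linear2 p q) i j = (if i = 1 \<and> j = 0 then p else if i = 0 \<and> j = 1 then q else 0)"
  using coeff2_linear2_mult[of p q 1 i j] by auto

fun cubic_coeff :: "'a::zero cubic_form \<Rightarrow> nat \<Rightarrow> nat \<Rightarrow> 'a" where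
  "cubic_coeff (Cubic a b c d) i j =
     (if i = 3 \<and> j = 0 then a else if i = 2 \<and> j = 1 then b else
      if i = 1 \<and> j = 2 then c else if i = 0 \<and> j = 3 then d else 0)"

lemma cubic_coeff_eq_0: "i + j \<noteq> 3 \<Longrightarrow> cubic_coeff g i j = 0"
  by (cases g) auto

lemma cubic_coeff_lincomb: "cubic_coeff (cubic_lincomb u g v h) i j = u * cubic_coeff g i j + v * cubic_coeff h i j"
  by (cases g; cases h) auto

lemma coeff2_trunc2: "coeff2 (trunc2 k g) i j = (if i + j \<le> k then coeff2 g i j else 0)"
  by (simp add: trunc2_def coeff2_def)

definition ps2_of_cubic :: "'a::comm_ring_1 cubic_form \<Rightarrow> 'a ps2" where
  "ps2_of_cubic g = (case g of Cubic a b c d \<Rightarrow>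
     const2 a * mono2 3 0 + const2 b * mono2 2 1 + const2 c * mono2 1 2 + const2 d * mono2 0 3)"

definition cubic_part :: "'a::comm_ring_1 ps2 \<Rightarrow> 'a cubic_form" where
  "cubic_part f = Cubic (coeff2 f 3 0) (coeff2 f 2 1) (coeff2 f 1 2) (coeff2 f 0 3)"

lemma coeff2_ps2_of_cubic: "coeff2 (ps2_of_cubic g) i j = cubic_coeff g i j"
  by (cases g) (simp add: ps2_of_cubic_def coeff2_mono2)

lemma pairs_of_sum_3: "{(a, b). a + b = (3::nat)} = {(3, 0), (2, 1), (1, 2), (0, 3)}"
proof -
  have "a + b = 3 \<Longrightarrow> a \<in> {0, 1, 2, 3}" for a b :: nat by auto
  then show ?thesis by auto
qed

lemma coeff2_subst2_below_3:
  assumes "\<And>a b. a + b < 3 \<Longrightarrow> coeff2 g a b = 0" and "i + j < 3"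
  shows "coeff2 (subst2 g \<phi>1 \<phi>2) i j = 0"
  using assms by (auto simp: subst2_def coeff2_def intro!: sum.neutral)

lemma coeff2_subst2_degree_3:
  assumes low: "\<And>a b. a + b < 3 \<Longrightarrow> coeff2 g a b = 0" and "i + j = 3"
  shows "coeff2 (subst2 g \<phi>1 \<phi>2) i j =
           (\<Sum>(a, b) \<in> {(3, 0), (2, 1), (1, 2), (0, 3)}. coeff2 g a b * coeff2 (\<phi>1^a * \<phi>2^b) i j)"
proof -
  have "coeff2 (subst2 g \<phi>1 \<phi>2) i j =
      (\<Sum>(a, b) \<in> {(a, b). a + b \<le> i + j}. coeff2 g a b * coeff2 (\<phi>1^a * \<phi>2^b) i j)"
    by (simp add: subst2_def coeff2_def)
  also have "\<dots> = (\<Sum>(a, b) \<in> {(3, 0), (2, 1), (1, 2), (0, 3)}. coeff2 g a b * coeff2 (\<phi>1^a * \<phi>2^b) i j)"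
  proof (rule sum.mono_neutral_right)
    show "finite {(a::nat, b::nat). a + b \<le> i + j}"
      by (rule finite_subset[of _ "{..i + j} \<times> {..i + j}"]) auto
    show "{(3, 0), (2, 1), (1, 2), (0, 3)} \<subseteq> {(a::nat, b::nat). a + b \<le> i + j}"
      using assms(2) by auto
    show "\<forall>x \<in> {(a, b). a + b \<le> i + j} - {(3, 0), (2, 1), (1, 2), (0, 3)}.
            (case x of (a, b) \<Rightarrow> coeff2 g a b * coeff2 (\<phi>1^a * \<phi>2^b) i j) = 0"
    proof
      fix x assume "x \<in> {(a, b). a + b \<le> i + j} - {(3, 0), (2, 1), (1, 2), (0::nat, 3::nat)}"
      then obtain a b where x: "x = (a, b)" and "a + b \<le> i + j"
        and "(a, b) \<notin> {(3, 0), (2, 1), (1, 2), (0, 3)}" by blast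
      then have "a + b \<noteq> 3" using pairs_of_sum_3 by blast
      with \<open>a + b \<le> i + j\<close> assms(2) have "a + b < 3" by linarith
      with x show "(case x of (a, b) \<Rightarrow> coeff2 g a b * coeff2 (\<phi>1^a * \<phi>2^b) i j) = 0"
        by (simp add: low)
    qed
  qed
  finally show ?thesis .
qed

lemma coeff2_subst2_linear2:
  assumes "\<And>a b. a + b < 3 \<Longrightarrow> coeff2 g a b = 0" and "i + j \<le> 3"
  shows "coeff2 (subst2 g (linear2 p q) (linear2 r s)) i j =
           cubic_coeff (cubic_subst p q r s (cubic_part g)) i j"
proof (cases "i + j = 3")
  case True
  then have "(i, j) \<in> {(3, 0), (2, 1), (1, 2), (0, 3)}"
    using pairs_of_sum_3 by blast
  moreover note coeff2_subst2_degree_3[OF assms(1) True, of "linear2 p q" "linear2 r s"]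
  ultimately show ?thesis
    by (simp add: cubic_part_def) (elim disjE; simp add: eval_nat_numeral mult.assoc algebra_simps)
next
  case False
  with assms show ?thesis
    by (simp add: coeff2_subst2_below_3 cubic_coeff_eq_0)
qed

lemma K3_equiv_if_cubic_pair_equiv:
  fixes f1 f2 :: "'a::field ps2"
  assumes low1: "\<And>a b. a + b < 3 \<Longrightarrow> coeff2 f1 a b = 0"
    and low2: "\<And>a b. a + b < 3 \<Longrightarrow> coeff2 f2 a b = 0"
    and "cubic_pair_equiv (cubic_part f1, cubic_part f2) (g1, g2)"
  shows "K3_equiv (f1, f2) (ps2_of_cubic g1, ps2_of_cubic g2)"
proof -
  obtain p q r s u v w z where det\<phi>: "p*s - q*r \<noteq> 0" and detU: "u*z - v*w \<noteq> 0"
    and g: "(g1, g2) = cubic_pair_act p q r s u v w z (cubic_part f1, cubic_part f2)"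
    using assms(3) unfolding cubic_pair_equiv_def by blast
  define U where "U = ((const2 u, const2 v), (const2 w, const2 z))"
  define \<phi> where "\<phi> = (linear2 p q, linear2 r s)"
  have "is_GL2 U" using detU by (simp add: is_GL2_def U_def)
  moreover have "is_aut \<phi>" using det\<phi> by (simp add: is_aut_def in_max_def \<phi>_def)
  moreover have "jet 3 (contact_act U \<phi> (f1, f2)) = jet 3 (ps2_of_cubic g1, ps2_of_cubic g2)"
    using g coeff2_subst2_linear2[OF low1, of _ _ p q r s] coeff2_subst2_linear2[OF low2, of _ _ p q r s]
    by (auto intro!: ps2_eqI simp: jet_def contact_act_def cubic_pair_act_def Let_def U_def \<phi>_def
        coeff2_trunc2 coeff2_ps2_of_cubic cubic_coeff_lincomb)
  ultimately show ?thesis unfolding K3_equiv_def by blast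
qed

lemma ord2_le: "coeff2 f i j \<noteq> 0 \<Longrightarrow> ord2 f \<le> i + j"
  unfolding ord2_def by (rule Least_le) blast

lemma coeff2_eq_0_below_ord2: "i + j < ord2 f \<Longrightarrow> coeff2 f i j = 0"
  using ord2_le by fastforce

lemma ord2_attained:
  assumes "f \<noteq> 0"
  obtains i j where "i + j = ord2 f" and "coeff2 f i j \<noteq> 0"
proof -
  have "\<exists>i j. coeff2 f i j \<noteq> 0"
  proof (rule ccontr)
    assume none: "\<nexists>i j. coeff2 f i j \<noteq> 0"
    have "f = 0" by (rule ps2_eqI) (use none in \<open>simp add: coeff2_def\<close>)
    with assms show False ..
  qed
  then obtain i0 j0 where i0j0: "coeff2 f i0 j0 \<noteq> 0" by blast
  have "\<exists>i j. i + j = ord2 f \<and> coeff2 f i j \<noteq> 0"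
    unfolding ord2_def by (rule LeastI[of _ "i0 + j0"]) (use i0j0 in blast)
  with that show ?thesis by blast
qed

lemma cubic_part_neq_0_if_ord2_eq_3:
  assumes "f \<noteq> 0" and "ord2 f = 3"
  shows "cubic_part f \<noteq> 0"
proof -
  obtain i j where "i + j = 3" and "coeff2 f i j \<noteq> 0"
    using ord2_attained[OF assms(1)] assms(2) by metis
  moreover from \<open>i + j = 3\<close> have "(i, j) \<in> {(3, 0), (2, 1), (1, 2), (0, 3)}"
    using pairs_of_sum_3 by blast
  ultimately show ?thesis by (auto simp: cubic_part_def)
qed

lemma regular_seq2_first_neq_0: "regular_seq2 f1 f2 \<Longrightarrow> f1 \<noteq> 0"
  unfolding regular_seq2_def by (metis mult_1 mult_zero_right one_neq_zero)

lemma of_nat_neq_0_below_CHAR: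
  assumes "0 < n" and "n < CHAR('a::semiring_1)"
  shows "(of_nat n :: 'a) \<noteq> 0"
  using assms by (auto simp: of_nat_eq_0_iff_char_dvd dest: dvd_imp_le)

lemma ps2_of_normal_cubics:
  "ps2_of_cubic (Cubic 0 0 0 0) = 0"
  "ps2_of_cubic (Cubic 1 0 0 0) = px^3"
  "ps2_of_cubic (Cubic 0 1 0 0) = px^2 * py"
  "ps2_of_cubic (Cubic 0 0 1 0) = px * py^2"
  "ps2_of_cubic (Cubic 0 0 0 1) = py^3"
  "ps2_of_cubic (Cubic 0 1 0 1) = py^3 + px^2 * py"
  "ps2_of_cubic (Cubic 1 0 1 0) = px^3 + px * py^2"
  "ps2_of_cubic (Cubic 1 0 0 1) = px^3 + py^3"
  "ps2_of_cubic (Cubic 1 1 0 0) = px^3 + px^2 * py"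
  "ps2_of_cubic (Cubic 0 l 0 1) = py^3 + const2 l * px^2 * py"
  by (simp_all add: ps2_of_cubic_def mono2_def mult.assoc add.commute)

theorem proposition5p1:
  fixes f1 f2 :: "'a::alg_closed_field ps2"
  assumes "CHAR('a) > 3"
    and "ICIS f1 f2"
    and "unimodal (f1, f2)"
    and "ord2 f1 = 3"
    and "ord2 f2 \<ge> 3"
  shows "K3_equiv (f1, f2) (px ^ 3, 0)
       \<or> K3_equiv (f1, f2) (px ^ 3, px ^ 2 * py)
       \<or> K3_equiv (f1, f2) (px ^ 3, px * py ^ 2)
       \<or> K3_equiv (f1, f2) (px ^ 3, py ^ 3 + px ^ 2 * py)
       \<or> K3_equiv (f1, f2) (px ^ 3, py ^ 3)
       \<or> K3_equiv (f1, f2) (px ^ 2 * py, 0)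
       \<or> K3_equiv (f1, f2) (px ^ 2 * py, px * py ^ 2)
       \<or> K3_equiv (f1, f2) (px ^ 2 * py, px ^ 3 + px * py ^ 2)
       \<or> (\<exists>c::'a. c \<noteq> 0 \<and>
            K3_equiv (f1, f2) (px ^ 3 + px ^ 2 * py, py ^ 3 + fps_const (fps_const c) * px ^ 2 * py))
       \<or> K3_equiv (f1, f2) (px ^ 2 * py, px ^ 3 + py ^ 3)
       \<or> K3_equiv (f1, f2) (px ^ 3 + px * py ^ 2, 0)"
proof -
  have two: "(2::'a) \<noteq> 0" and three: "(3::'a) \<noteq> 0"
    using of_nat_neq_0_below_CHAR[where 'a='a, of 2] of_nat_neq_0_below_CHAR[where 'a='a, of 3] assms(1)
    by simp_all
  have "f1 \<noteq> 0"
    using assms(2) unfolding ICIS_def by (blast dest: regular_seq2_first_neq_0)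
  then have "cubic_part f1 \<noteq> 0"
    using assms(4) by (rule cubic_part_neq_0_if_ord2_eq_3)
  with two three have "has_normal_form (cubic_part f1, cubic_part f2)"
    by (rule has_normal_form_pair)
  then obtain g1 g2 where normal: "normal_cubic_pair (g1, g2)"
    and equiv: "cubic_pair_equiv (cubic_part f1, cubic_part f2) (g1, g2)"
    unfolding has_normal_form_def by auto
  have "coeff2 f1 a b = 0" "coeff2 f2 a b = 0" if "a + b < 3" for a b
    using that assms(4,5) by (simp_all add: coeff2_eq_0_below_ord2)
  then have "K3_equiv (f1, f2) (ps2_of_cubic g1, ps2_of_cubic g2)"
    using equiv by (rule K3_equiv_if_cubic_pair_equiv)
  with normal show ?thesis
    unfolding normal_cubic_pair_def by (auto simp: ps2_of_normal_cubics)
qed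

end
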